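(* Let $\lambda>0$, $p\in(0,1]$, $\alpha>2$, $d>0$, $\theta>0$, $R=\log(1+\theta)$, and $\lambda_{max}=\frac{1}{d^2\theta^{2/\alpha}\kappa(\alpha)}$ with $\kappa(\alpha)=\frac{2\pi^2}{\alpha\sin(2\pi/\alpha)}$. For $q\in(0,1]$ let $r(q)=\min\{p/q,1\}$ and $$C(q)=\lambda\, r(q)\, q\,\exp\!\Big(-\frac{\lambda\, r(q)\, q}{\lambda_{max}}\Big)R .$$ If $p>\frac{\lambda_{max}}{\lambda}$, then $q^\star=\frac{\lambda_{max}}{\lambda}$ maximizes $C$ over $(0,1]$. Otherwise (i.e. if $p\le \frac{\lambda_{max}}{\lambda}$), every $q\in[p,1]$ maximizes $C$ over $(0,1]$.
   Context: Model: transmitters of a wireless ad hoc network are located according to a homogeneous Poisson point process of density $\lambda$ in $\mathbb{R}^2$, each with its receiver at distance $d$; path-loss exponent $\alpha$, Rayleigh fading, interference-limited, and a transmission succeeds if the signal-to-interference ratio exceeds $\theta$. Each transmitter harvests one unit of energy per time slot with probability $p$ (i.i.d. Bernoulli), stores it in a battery of infinite capacity, and, whenever its stored energy is at least $1$, transmits with unit power (spending one unit) with probability $q$ (ALOHA). The stationary probability that the battery is nonempty is $r(q)=\min\{p/q,1\}$, and the transmission capacity (density of active transmitters times success probability times rate $R$) equals $C(q)$ above. The ALOHA transmission probability is called optimal if it maximizes $C$. *)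

theory Defs
  imports "HOL-Analysis.Analysis"
begin

definition kappa :: "real \<Rightarrow> real" where
  "kappa \<alpha> = 2 * pi\<^sup>2 / (\<alpha> * sin (2 * pi / \<alpha>))"

definition lambda_max :: "real \<Rightarrow> real \<Rightarrow> real \<Rightarrow> real" where
  "lambda_max d \<theta> \<alpha> = 1 / (d\<^sup>2 * \<theta> powr (2 / \<alpha>) * kappa \<alpha>)"

definition rate :: "real \<Rightarrow> real" where
  "rate \<theta> = ln (1 + \<theta>)"

definition rprob :: "real \<Rightarrow> real \<Rightarrow> real" where
  "rprob p q = min (p / q) 1"

definition tcap :: "real \<Rightarrow> real \<Rightarrow> real \<Rightarrow> real \<Rightarrow> real \<Rightarrow> real \<Rightarrow> real" where
  "tcap lam p \<alpha> d \<theta> q =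
     lam * rprob p q * q * exp (- (lam * rprob p q * q / lambda_max d \<theta> \<alpha>)) * rate \<theta>"

definition maximizes_on :: "(real \<Rightarrow> real) \<Rightarrow> real set \<Rightarrow> real \<Rightarrow> bool" where
  "maximizes_on f S x \<longleftrightarrow> x \<in> S \<and> (\<forall>y\<in>S. f y \<le> f x)"

end

theory Submission
  imports Defs
begin

text \<open>Since \<open>r(q) q = min p q\<close>, the capacity is \<open>R \<cdot> f(\<lambda> min p q)\<close> with
  \<open>f x = x exp (- x / L)\<close> and \<open>L = lambda_max\<close>. The function \<open>f\<close> increases on \<open>[0, L]\<close> and
  attains its global maximum on \<open>[0, \<infinity>)\<close> at \<open>L\<close>, both by \<open>1 + t \<le> exp t\<close>. If
  \<open>\<lambda> p > L\<close>, the choice \<open>q = L / \<lambda>\<close> makes \<open>\<lambda> min p q = L\<close>; otherwise \<open>\<lambda> min p q\<close>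
  never exceeds \<open>\<lambda> p \<le> L\<close>, and it equals \<open>\<lambda> p\<close> exactly when \<open>q \<ge> p\<close>.\<close>

lemma mult_exp_neg_divide_mono:
  fixes L x y :: real
  assumes "L > 0" "0 \<le> y" "y \<le> x" "x \<le> L"
  shows "y * exp (- (y / L)) \<le> x * exp (- (x / L))"
proof -
  have "y \<le> x * (1 + (y - x) / L)"
  proof -
    have "(x - y) * (L - x) \<ge> 0" using assms by simp
    then have "y * L \<le> x * (L + (y - x))" by (simp add: algebra_simps)
    then show ?thesis using assms by (simp add: field_simps)
  qed
  also have "\<dots> \<le> x * exp ((y - x) / L)"
    using exp_ge_add_one_self assms by (intro mult_left_mono) auto
  finally have "y * exp (- (y / L)) \<le> x * exp ((y - x) / L) * exp (- (y / L))"
    by (intro mult_right_mono) auto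
  also have "\<dots> = x * exp (- (x / L))"
    by (simp add: mult.assoc exp_add[symmetric] diff_divide_distrib)
  finally show ?thesis .
qed

lemma mult_exp_neg_divide_le_max:
  fixes L x :: real
  assumes "L > 0" "0 \<le> x"
  shows "x * exp (- (x / L)) \<le> L * exp (- 1)"
proof -
  have "x = L * (1 + (x / L - 1))" using assms by simp
  also have "\<dots> \<le> L * exp (x / L - 1)"
    using exp_ge_add_one_self[of "x / L - 1"] assms by (intro mult_left_mono) auto
  finally have "x * exp (- (x / L)) \<le> L * exp (x / L - 1) * exp (- (x / L))"
    by (intro mult_right_mono) auto
  also have "\<dots> = L * exp (- 1)" by (simp add: mult.assoc exp_add[symmetric])
  finally show ?thesis .
qed

lemma kappa_pos:
  assumes "\<alpha> > 2"
  shows "kappa \<alpha> > 0"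
proof -
  have "sin (2 * pi / \<alpha>) > 0"
    using assms by (intro sin_gt_zero) (auto simp: field_simps)
  then show ?thesis unfolding kappa_def using assms by simp
qed

lemma lambda_max_pos: "\<alpha> > 2 \<Longrightarrow> d > 0 \<Longrightarrow> \<theta> > 0 \<Longrightarrow> lambda_max d \<theta> \<alpha> > 0"
  unfolding lambda_max_def using kappa_pos[of \<alpha>] by simp

lemma rate_pos: "\<theta> > 0 \<Longrightarrow> rate \<theta> > 0"
  unfolding rate_def by simp

lemma rprob_mult_self: "p > 0 \<Longrightarrow> q > 0 \<Longrightarrow> rprob p q * q = min p q"
  unfolding rprob_def by (auto simp: min_def field_simps)

lemma tcap_eq_min:
  assumes "p > 0" "q > 0"
  shows "tcap lam p \<alpha> d \<theta> q =
    lam * min p q * exp (- (lam * min p q / lambda_max d \<theta> \<alpha>)) * rate \<theta>"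
  unfolding tcap_def using rprob_mult_self[OF assms] by (simp add: mult.assoc)

lemma tcap_le_max:
  assumes "lam > 0" "p > 0" "q > 0" "\<alpha> > 2" "d > 0" "\<theta> > 0"
  shows "tcap lam p \<alpha> d \<theta> q \<le> lambda_max d \<theta> \<alpha> * exp (- 1) * rate \<theta>"
  unfolding tcap_eq_min[OF assms(2,3)] using assms rate_pos[of \<theta>]
  by (intro mult_right_mono mult_exp_neg_divide_le_max lambda_max_pos) auto

lemma tcap_at_lambda_max:
  assumes "lam > 0" "p > lambda_max d \<theta> \<alpha> / lam" "\<alpha> > 2" "d > 0" "\<theta> > 0"
  shows "tcap lam p \<alpha> d \<theta> (lambda_max d \<theta> \<alpha> / lam) = lambda_max d \<theta> \<alpha> * exp (- 1) * rate \<theta>"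
proof -
  have L: "lambda_max d \<theta> \<alpha> > 0" using lambda_max_pos assms by blast
  then have "lam * min p (lambda_max d \<theta> \<alpha> / lam) = lambda_max d \<theta> \<alpha>"
    using assms by (simp add: min_def)
  then show ?thesis
    using L assms by (subst tcap_eq_min) (auto intro: less_trans[rotated])
qed

lemma tcap_le_saturated:
  assumes "lam > 0" "p > 0" "\<alpha> > 2" "d > 0" "\<theta> > 0"
    and "p \<le> lambda_max d \<theta> \<alpha> / lam" "y > 0" "p \<le> q"
  shows "tcap lam p \<alpha> d \<theta> y \<le> tcap lam p \<alpha> d \<theta> q"
proof -
  have L: "lambda_max d \<theta> \<alpha> > 0" using lambda_max_pos assms by blast
  have "lam * p \<le> lambda_max d \<theta> \<alpha>" using assms by (simp add: field_simps)
  then have "lam * min p y * exp (- (lam * min p y / lambda_max d \<theta> \<alpha>))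
      \<le> lam * p * exp (- (lam * p / lambda_max d \<theta> \<alpha>))"
    using L assms by (intro mult_exp_neg_divide_mono) auto
  then show ?thesis
    using assms rate_pos[of \<theta>] unfolding tcap_eq_min[OF assms(2,7)]
    by (subst tcap_eq_min) (auto simp: min_absorb1 intro!: mult_right_mono)
qed

theorem theorem1:
  fixes lam p \<alpha> d \<theta> :: real
  assumes "lam > 0" and "0 < p" and "p \<le> 1" and "\<alpha> > 2" and "d > 0" and "\<theta> > 0"
  shows "(p > lambda_max d \<theta> \<alpha> / lam \<longrightarrow>
           maximizes_on (tcap lam p \<alpha> d \<theta>) {0<..1} (lambda_max d \<theta> \<alpha> / lam))
       \<and> (p \<le> lambda_max d \<theta> \<alpha> / lam \<longrightarrow>
           (\<forall>q\<in>{p..1}. maximizes_on (tcap lam p \<alpha> d \<theta>) {0<..1} q))"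
proof (intro conjI impI ballI)
  assume above: "p > lambda_max d \<theta> \<alpha> / lam"
  have "lambda_max d \<theta> \<alpha> / lam \<in> {0<..1}"
    using lambda_max_pos[OF assms(4-6)] assms(1,3) above
    by (simp del: divide_le_eq_1_pos)
  then show "maximizes_on (tcap lam p \<alpha> d \<theta>) {0<..1} (lambda_max d \<theta> \<alpha> / lam)"
    unfolding maximizes_on_def tcap_at_lambda_max[OF assms(1) above assms(4-6)]
    using assms tcap_le_max by auto
next
  fix q assume "p \<le> lambda_max d \<theta> \<alpha> / lam" "q \<in> {p..1}"
  then show "maximizes_on (tcap lam p \<alpha> d \<theta>) {0<..1} q"
    unfolding maximizes_on_def using assms tcap_le_saturated by auto
qed

end
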